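(* Let $n\ge3$ and let $p$ be a permutation pattern whose longest decreasing subsequence has length at least $4$. Then the coefficient sequence $(a_i)$ of $F_{p,n}(x)$ is unbounded.
   Context: An affine permutation of size $n$ is a bijection $w:\mathbb{Z}\to\mathbb{Z}$ with $w(i+n)=w(i)+n$ for all $i$ and $w(1)+\cdots+w(n)=\binom{n+1}{2}$; $\widetilde{S}_n$ is the group of these, generated by $s_0,\dots,s_{n-1}$ where $ws_i$ swaps the values at positions $i+mn$ and $i+1+mn$ for all $m\in\mathbb{Z}$; $\ell(w)$ is the minimal number of generators in a factorization. For $p\in S_k$, $w$ contains $p$ if there exist integers $i_1<\cdots<i_k$ with $w(i_1),\dots,w(i_k)$ in the same relative order as $p_1,\dots,p_k$; otherwise $w$ avoids $p$. $F_{p,n}(x)=\sum_{w\in\widetilde{S}_n,\,w\text{ avoids }p}x^{\ell(w)}=\sum_i a_ix^i$. *)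

theory Defs
  imports Main "HOL-Library.Sublist"
begin

definition affine_perm :: "nat \<Rightarrow> (int \<Rightarrow> int) \<Rightarrow> bool" where
  "affine_perm n w \<longleftrightarrow> bij w \<and> (\<forall>i. w (i + int n) = w i + int n)
     \<and> (\<Sum>i=1..int n. w i) = int ((n + 1) * n div 2)"

text \<open>The generator s_i (0 \<le> i < n) as a map on positions: it swaps
  i+mn and i+1+mn for every m. Right multiplication w s_i is w \<circ> s_i.\<close>
definition affine_gen :: "nat \<Rightarrow> nat \<Rightarrow> int \<Rightarrow> int" where
  "affine_gen n i j =
     (if j mod int n = int i mod int n then j + 1
      else if j mod int n = (int i + 1) mod int n then j - 1
      else j)"

definition gen_prod :: "nat \<Rightarrow> nat list \<Rightarrow> int \<Rightarrow> int" where
  "gen_prod n is = foldr (\<lambda>i f. affine_gen n i \<circ> f) is id"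

definition affine_length :: "nat \<Rightarrow> (int \<Rightarrow> int) \<Rightarrow> nat" where
  "affine_length n w =
     (LEAST k. \<exists>is. length is = k \<and> (\<forall>i\<in>set is. i < n) \<and> w = gen_prod n is)"

definition is_pattern :: "nat list \<Rightarrow> bool" where
  "is_pattern p \<longleftrightarrow> distinct p \<and> set p = {1..length p}"

definition contains :: "(int \<Rightarrow> int) \<Rightarrow> nat list \<Rightarrow> bool" where
  "contains w p \<longleftrightarrow> (\<exists>idx :: nat \<Rightarrow> int.
      (\<forall>a b. a < b \<longrightarrow> b < length p \<longrightarrow> idx a < idx b) \<and>
      (\<forall>a<length p. \<forall>b<length p. (w (idx a) < w (idx b)) \<longleftrightarrow> (p ! a < p ! b)))"

definition avoids :: "(int \<Rightarrow> int) \<Rightarrow> nat list \<Rightarrow> bool" where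
  "avoids w p \<longleftrightarrow> \<not> contains w p"

definition longest_dec :: "nat list \<Rightarrow> nat" where
  "longest_dec p = Max {length q | q. subseq q p \<and> sorted_wrt (>) q}"

text \<open>a_i: the coefficient of x^i in F_{p,n}(x).\<close>
definition avoid_coeff :: "nat list \<Rightarrow> nat \<Rightarrow> nat \<Rightarrow> nat" where
  "avoid_coeff p n i =
     card {w. affine_perm n w \<and> avoids w p \<and> affine_length n w = i}"

end

theory Submission
  imports Defs
begin

text \<open>Translations j \<mapsto> j + n c(j mod n) with c summing to zero over a period
  are affine permutations, and a translation whose vector c takes only three
  values increases on each of the three resulting classes of positions, so it
  avoids every pattern containing a decreasing subsequence of length 4. The
  (n-1)-st power of the Coxeter element s_k s_{k+1} \<dots> s_{k-1} is the translation
  by the vector with 1 - n in place k and 1 elsewhere; products of u such powers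
  for k = 0 and v for k = 1 give (K+1)^2 distinct avoiders when u, v range over
  an interval of length K, and their lengths, squeezed between u + v and
  (n-1) n (u+v), stay within an interval of length O(K).\<close>

section \<open>Avoidance through increasing fibres\<close>

lemma subseq_nth_embedding:
  assumes "subseq q p"
  obtains f where "\<And>a b. a < b \<Longrightarrow> b < length q \<Longrightarrow> f a < f b"
    and "\<And>a. a < length q \<Longrightarrow> f a < length p \<and> q ! a = p ! f a"
proof -
  have "\<exists>f. (\<forall>a b. a < b \<longrightarrow> b < length q \<longrightarrow> f a < f b) \<and>
            (\<forall>a < length q. f a < length p \<and> q ! a = p ! f a)"
    using assms
  proof (induction rule: list_emb.induct)
    case (list_emb_Nil ys)
    then show ?case by auto
  next
    case (list_emb_Cons xs ys y)
    then obtain f where "\<forall>a b. a < b \<longrightarrow> b < length xs \<longrightarrow> f a < f b"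
      and "\<forall>a < length xs. f a < length ys \<and> xs ! a = ys ! f a" by blast
    then show ?case by (intro exI[of _ "Suc \<circ> f"]) auto
  next
    case (list_emb_Cons2 x y xs ys)
    then obtain f where f: "\<forall>a b. a < b \<longrightarrow> b < length xs \<longrightarrow> f a < f b"
      and f': "\<forall>a < length xs. f a < length ys \<and> xs ! a = ys ! f a" by blast
    define g where "g a = (case a of 0 \<Rightarrow> 0 | Suc a \<Rightarrow> Suc (f a))" for a
    have "g a < g b" if "a < b" "b < length (x # xs)" for a b
      using f that by (cases a; cases b) (auto simp: g_def)
    moreover have "g a < length (y # ys) \<and> (x # xs) ! a = (y # ys) ! g a"
      if "a < length (x # xs)" for a
      using f' list_emb_Cons2.hyps(1) that by (cases a) (auto simp: g_def)
    ultimately show ?case by blast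
  qed
  then show ?thesis using that by blast
qed

lemma longest_dec_witness:
  obtains f where "\<And>a b. a < b \<Longrightarrow> b < longest_dec p \<Longrightarrow> f a < f b \<and> p ! f b < p ! f a"
    and "\<And>a. a < longest_dec p \<Longrightarrow> f a < length p"
proof -
  let ?S = "{length q | q. subseq q p \<and> sorted_wrt (>) q}"
  have "finite ?S"
    by (rule finite_subset[of _ "{..length p}"]) (auto dest: list_emb_length)
  moreover have "?S \<noteq> {}" by (auto intro: exI[of _ "[]"])
  ultimately have "Max ?S \<in> ?S" by (rule Max_in)
  then obtain q where q: "subseq q p" "sorted_wrt (>) q" "length q = longest_dec p"
    unfolding longest_dec_def by auto
  obtain f where f: "\<And>a b. a < b \<Longrightarrow> b < length q \<Longrightarrow> f a < f b"
    and f': "\<And>a. a < length q \<Longrightarrow> f a < length p \<and> q ! a = p ! f a"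
    using subseq_nth_embedding[OF q(1)] by blast
  show ?thesis
  proof
    fix a b assume "a < b" "b < longest_dec p"
    then show "f a < f b \<and> p ! f b < p ! f a"
      using f f' sorted_wrt_nth_less[OF q(2)] q(3) by (metis order.strict_trans)
  next
    fix a assume "a < longest_dec p"
    then show "f a < length p" using f' q(3) by simp
  qed
qed

text \<open>Pigeonhole: a decreasing subsequence of p of length longest_dec p would
  have to place two of its entries in the same fibre of G, where w increases.\<close>
lemma avoids_if_increasing_on_fibres:
  fixes G :: "int \<Rightarrow> 'a"
  assumes "finite (range G)" "card (range G) < longest_dec p"
    and incr: "\<And>x y. x < y \<Longrightarrow> G x = G y \<Longrightarrow> w x < w y"
  shows "avoids w p"
  unfolding avoids_def contains_def
proof
  assume "\<exists>idx :: nat \<Rightarrow> int. (\<forall>a b. a < b \<longrightarrow> b < length p \<longrightarrow> idx a < idx b) \<and>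
      (\<forall>a<length p. \<forall>b<length p. (w (idx a) < w (idx b)) \<longleftrightarrow> (p ! a < p ! b))"
  then obtain idx :: "nat \<Rightarrow> int" where idx_mono: "\<forall>a b. a < b \<longrightarrow> b < length p \<longrightarrow> idx a < idx b"
    and idx_order: "\<forall>a<length p. \<forall>b<length p. (w (idx a) < w (idx b)) \<longleftrightarrow> (p ! a < p ! b)"
    by blast
  obtain f where f_dec: "\<And>a b. a < b \<Longrightarrow> b < longest_dec p \<Longrightarrow> f a < f b \<and> p ! f b < p ! f a"
    and f_range: "\<And>a. a < longest_dec p \<Longrightarrow> f a < length p"
    using longest_dec_witness by blast
  let ?g = "G \<circ> idx \<circ> f"
  have "card (?g ` {..<longest_dec p}) \<le> card (range G)"
    by (rule card_mono[OF assms(1)]) auto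
  then have "\<not> inj_on ?g {..<longest_dec p}"
    using assms(2) by (intro pigeonhole) simp
  then obtain a b where ab: "a < b" "b < longest_dec p" "G (idx (f a)) = G (idx (f b))"
    unfolding inj_on_def by (metis lessThan_iff linorder_neqE_nat o_apply)
  have "idx (f a) < idx (f b)" using idx_mono f_dec[OF ab(1,2)] f_range[OF ab(2)] by blast
  then have "w (idx (f a)) < w (idx (f b))" using incr ab(3) by blast
  moreover have "w (idx (f b)) < w (idx (f a))"
    using idx_order f_dec[OF ab(1,2)] f_range ab by (meson order.strict_trans)
  ultimately show False by simp
qed

section \<open>Coxeter length\<close>

lemma gen_prod_Nil [simp]: "gen_prod n [] = id"
  by (simp add: gen_prod_def)

lemma gen_prod_Cons [simp]: "gen_prod n (i # is) = affine_gen n i \<circ> gen_prod n is"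
  by (simp add: gen_prod_def)

lemma gen_prod_append: "gen_prod n (xs @ ys) = gen_prod n xs \<circ> gen_prod n ys"
  by (induction xs) auto

lemma gen_prod_replicate: "gen_prod n (concat (replicate k xs)) = gen_prod n xs ^^ k"
  by (induction k) (simp_all add: gen_prod_append)

lemma affine_length_le_length:
  assumes "\<forall>i\<in>set is. i < n"
  shows "affine_length n (gen_prod n is) \<le> length is"
  unfolding affine_length_def by (rule Least_le) (use assms in blast)

lemma affine_length_witness:
  assumes "\<exists>is. (\<forall>i\<in>set is. i < n) \<and> w = gen_prod n is"
  obtains "is" where "length is = affine_length n w" "\<forall>i\<in>set is. i < n" "w = gen_prod n is"
proof -
  let ?P = "\<lambda>k. \<exists>is. length is = k \<and> (\<forall>i\<in>set is. i < n) \<and> w = gen_prod n is"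
  have "\<exists>k. ?P k" using assms by blast
  then have "?P (LEAST k. ?P k)" by (rule LeastI_ex)
  then show ?thesis using that unfolding affine_length_def by blast
qed

lemma abs_affine_gen_sub_le: "\<bar>affine_gen n i j - j\<bar> \<le> 1"
  by (simp add: affine_gen_def)

lemma abs_gen_prod_sub_le: "\<bar>gen_prod n is j - j\<bar> \<le> int (length is)"
proof (induction "is")
  case Nil
  then show ?case by simp
next
  case (Cons i "is")
  then show ?case using abs_affine_gen_sub_le[of n i "gen_prod n is j"] by simp
qed

lemma abs_sub_le_affine_length:
  assumes "\<exists>is. (\<forall>i\<in>set is. i < n) \<and> w = gen_prod n is"
  shows "\<bar>w j - j\<bar> \<le> int (affine_length n w)"
proof -
  obtain "is" where "length is = affine_length n w" "w = gen_prod n is"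
    by (rule affine_length_witness[OF assms])
  then show ?thesis using abs_gen_prod_sub_le[of n "is" j] by simp
qed

text \<open>A map that is not a product of generators gets the junk length
  LEAST k. False, so this is the one level that may be infinite.\<close>
lemma finite_affine_length_level:
  assumes "i \<noteq> (LEAST k::nat. False)"
  shows "finite {w. affine_length n w = i}"
proof (rule finite_subset)
  show "{w. affine_length n w = i} \<subseteq> gen_prod n ` {is. set is \<subseteq> {..<n} \<and> length is = i}"
  proof
    fix w assume w: "w \<in> {w. affine_length n w = i}"
    have "\<exists>is. (\<forall>i\<in>set is. i < n) \<and> w = gen_prod n is"
    proof (rule ccontr)
      assume "\<nexists>is. (\<forall>i\<in>set is. i < n) \<and> w = gen_prod n is"
      then have "(\<lambda>k. \<exists>is. length is = k \<and> (\<forall>i\<in>set is. i < n) \<and> w = gen_prod n is) = (\<lambda>k. False)"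
        by blast
      then have "affine_length n w = (LEAST k::nat. False)"
        unfolding affine_length_def by simp
      then show False using w assms by simp
    qed
    then obtain "is" where "length is = affine_length n w" "\<forall>i\<in>set is. i < n" "w = gen_prod n is"
      by (rule affine_length_witness)
    then show "w \<in> gen_prod n ` {is. set is \<subseteq> {..<n} \<and> length is = i}" using w by auto
  qed
  show "finite (gen_prod n ` {is. set is \<subseteq> {..<n} \<and> length is = i})"
    by (intro finite_imageI finite_lists_length_eq) simp
qed

section \<open>Translations\<close>

definition translation :: "nat \<Rightarrow> (int \<Rightarrow> int) \<Rightarrow> int \<Rightarrow> int" where
  "translation n c j = j + int n * c (j mod int n)"

lemma translation_translation:
  "translation n c (translation n d j) = translation n (\<lambda>r. c r + d r) j"
  by (simp add: translation_def algebra_simps)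

lemma funpow_translation: "translation n c ^^ k = translation n (\<lambda>r. int k * c r)"
proof (induction k)
  case 0
  then show ?case by (simp add: translation_def fun_eq_iff)
next
  case (Suc k)
  then show ?case by (simp add: fun_eq_iff translation_translation algebra_simps)
qed

lemma bij_translation: "bij (translation n c)"
proof (rule o_bij[of "translation n (\<lambda>r. - c r)"])
  show "translation n (\<lambda>r. - c r) \<circ> translation n c = id"
    by (simp add: fun_eq_iff translation_translation) (simp add: translation_def)
  show "translation n c \<circ> translation n (\<lambda>r. - c r) = id"
    by (simp add: fun_eq_iff translation_translation) (simp add: translation_def)
qed

lemma sum_int_atLeastAtMost: "(\<Sum>i=1..int n. i) = int ((n + 1) * n div 2)"
proof -
  have "{1..int n} = int ` {1..n}"
    by (simp add: image_int_atLeastAtMost)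
  then have "(\<Sum>i=1..int n. i) = (\<Sum>i=1..n. int i)"
    by (simp add: sum.reindex)
  also have "\<dots> = int n * (int n + 1) div 2"
    using gauss_sum_from_Suc_0[of n, where 'a = int] by simp
  finally show ?thesis by (simp add: zdiv_int algebra_simps)
qed

lemma affine_perm_translation:
  assumes "(\<Sum>i=1..int n. c (i mod int n)) = 0"
  shows "affine_perm n (translation n c)"
proof -
  have "(\<Sum>i=1..int n. translation n c i) = (\<Sum>i=1..int n. i) + int n * (\<Sum>i=1..int n. c (i mod int n))"
    by (simp add: translation_def sum.distrib sum_distrib_left)
  then show ?thesis
    using assms bij_translation sum_int_atLeastAtMost
    by (simp add: affine_perm_def translation_def)
qed

lemma translation_strict_mono_on_fibre:
  assumes "x < y" "c (x mod int n) = c (y mod int n)"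
  shows "translation n c x < translation n c y"
  using assms by (simp add: translation_def)

lemma translation_eq_imp_vector_eq:
  assumes "translation n c = translation n d" "0 \<le> r" "r < int n"
  shows "c r = d r"
proof -
  have "r + int n * c r = r + int n * d r"
    using fun_cong[OF assms(1), of r] assms(2,3) by (simp add: translation_def)
  then show ?thesis using assms(2,3) by simp
qed

lemma avoids_translation:
  assumes "finite (range c)" "card (range c) < longest_dec p"
  shows "avoids (translation n c) p"
proof (rule avoids_if_increasing_on_fibres)
  have sub: "range (\<lambda>x. c (x mod int n)) \<subseteq> range c" by auto
  then show "finite (range (\<lambda>x. c (x mod int n)))" using assms(1) by (rule finite_subset)
  show "card (range (\<lambda>x. c (x mod int n))) < longest_dec p"
    using card_mono[OF assms(1) sub] assms(2) by linarith
qed (rule translation_strict_mono_on_fibre)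

lemma sum_mod_period:
  assumes "n > 0"
  shows "(\<Sum>i=1..int n. f (i mod int n)) = (\<Sum>r=0..<int n. f r)"
proof -
  have "{1..int n} = insert (int n) {1..<int n}" "{0..<int n} = insert 0 {1..<int n}"
    using assms by auto
  moreover have "(\<Sum>i=1..<int n. f (i mod int n)) = (\<Sum>i=1..<int n. f i)"
    by (rule sum.cong) auto
  ultimately show ?thesis by simp
qed

definition spike :: "nat \<Rightarrow> int \<Rightarrow> int \<Rightarrow> int" where
  "spike n k r = (if r = k then 1 - int n else 1)"

lemma sum_spike:
  assumes "0 \<le> k" "k < int n"
  shows "(\<Sum>i=1..int n. spike n k (i mod int n)) = 0"
proof -
  have "(\<Sum>r=0..<int n. spike n k r) = (\<Sum>r=0..<int n. 1 + (if r = k then - int n else 0))"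
    by (rule sum.cong) (auto simp: spike_def)
  also have "\<dots> = (\<Sum>r=0..<int n. 1) + (\<Sum>r=0..<int n. if r = k then - int n else 0)"
    by (rule sum.distrib)
  also have "\<dots> = 0"
    using assms by simp
  moreover have "n > 0" using assms by linarith
  ultimately show ?thesis using sum_mod_period[of n "spike n k"] by simp
qed

section \<open>The Coxeter element\<close>

lemma mod_add_one_eq_if:
  fixes j m :: int
  assumes "m > 0"
  shows "(j + 1) mod m = (if j mod m + 1 < m then j mod m + 1 else 0)"
proof -
  have mod_eq: "(j + 1) mod m = (j mod m + 1) mod m" by (simp add: mod_add_left_eq)
  have bounds: "0 \<le> j mod m" "j mod m < m" using assms by simp_all
  then consider "j mod m + 1 < m" | "j mod m + 1 = m" by linarith
  then show ?thesis using mod_eq bounds by cases auto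
qed

lemma mod_diff_diff_eq:
  fixes j m a :: int
  shows "(j - (m - a)) mod m = (j mod m + a) mod m"
proof -
  have "(j - (m - a)) mod m = (j + a + (-1) * m) mod m" by (simp add: algebra_simps)
  also have "\<dots> = (j mod m + a) mod m" by (simp only: mod_mult_self1 mod_add_left_eq)
  finally show ?thesis .
qed

lemma affine_gen_eq_if:
  assumes "i < n"
  shows "affine_gen n i j = (if j mod int n = int i then j + 1
    else if j mod int n = (int i + 1) mod int n then j - 1 else j)"
  using assms by (simp add: affine_gen_def)

definition coxeter_suffix :: "nat \<Rightarrow> nat \<Rightarrow> int \<Rightarrow> int" where
  "coxeter_suffix n k j = (if j mod int n \<noteq> 0 \<and> j mod int n < int k then j
     else if j mod int n = 0 then j - (int n - int k) else j + 1)"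

lemma affine_gen_coxeter_suffix:
  assumes "1 \<le> k" "k < n"
  shows "affine_gen n k (coxeter_suffix n (Suc k) j) = coxeter_suffix n k j"
proof -
  define r where "r = j mod int n"
  have n: "int n > 0" using assms by simp
  have r: "0 \<le> r" "r < int n" using n by (simp_all add: r_def)
  have k1: "(int k + 1) mod int n = (if int k + 1 < int n then int k + 1 else 0)"
    using mod_add_one_eq_if[OF n, of "int k"] assms by simp
  have j1: "(j + 1) mod int n = (if r + 1 < int n then r + 1 else 0)"
    using mod_add_one_eq_if[OF n, of j] by (simp add: r_def)
  have j2: "(j - (int n - (1 + int k))) mod int n = (r + 1 + int k) mod int n"
    by (simp add: mod_diff_diff_eq r_def add.assoc)
  consider "r \<noteq> 0" "r < int k" | "r = int k" | "r \<noteq> 0" "r > int k" | "r = 0"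
    by linarith
  then show ?thesis
    by cases (use k1 k1[unfolded add.commute[of "int k"]] j1 j2 r assms in
        \<open>simp_all add: affine_gen_eq_if coxeter_suffix_def r_def[symmetric]\<close>)
qed

lemma gen_prod_coxeter_suffix:
  assumes "1 \<le> k" "k \<le> n"
  shows "gen_prod n [k..<n] = coxeter_suffix n k"
  using assms
proof (induction "n - k" arbitrary: k)
  case 0
  then have "k = n" "int n > 0" by simp_all
  then show ?case by (auto simp: coxeter_suffix_def fun_eq_iff)
next
  case (Suc d)
  then have "k < n" by simp
  then have "[k..<n] = k # [Suc k..<n]" by (simp add: upt_conv_Cons)
  moreover have "gen_prod n [Suc k..<n] = coxeter_suffix n (Suc k)" using Suc by simp
  ultimately show ?case using affine_gen_coxeter_suffix[OF Suc(3) \<open>k < n\<close>] by (auto simp: fun_eq_iff)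
qed

definition coxeter :: "nat \<Rightarrow> int \<Rightarrow> int" where
  "coxeter n j = (if j mod int n = 0 then j - int n
     else if j mod int n = int n - 1 then j + 2 else j + 1)"

lemma gen_prod_coxeter:
  assumes "n \<ge> 3"
  shows "gen_prod n [0..<n] = coxeter n"
proof
  fix j
  define r where "r = j mod int n"
  have n: "int n > 0" using assms by simp
  have r: "0 \<le> r" "r < int n" using n by (simp_all add: r_def)
  have j1: "(j + 1) mod int n = (if r + 1 < int n then r + 1 else 0)"
    using mod_add_one_eq_if[OF n, of j] by (simp add: r_def)
  have j2: "(j - (int n - 1)) mod int n = (r + 1) mod int n"
    by (simp add: mod_diff_diff_eq r_def)
  have "[0..<n] = 0 # [1..<n]" using assms by (simp add: upt_conv_Cons)
  then have "gen_prod n [0..<n] j = affine_gen n 0 (coxeter_suffix n 1 j)"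
    using gen_prod_coxeter_suffix[of 1 n] assms by simp
  also have "\<dots> = coxeter n j"
  proof -
    consider "r \<noteq> 0" "r < int n - 1" | "r = int n - 1" | "r = 0"
      using r by linarith
    then show ?thesis
      by cases (use j1 j2 r assms in
          \<open>simp_all add: affine_gen_eq_if coxeter_suffix_def coxeter_def r_def[symmetric]\<close>)
  qed
  finally show "gen_prod n [0..<n] j = coxeter n j" .
qed

text \<open>index n enumerates the integers not divisible by n in increasing order;
  on them coxeter n is the successor, so its (n-1)-st power adds n.\<close>
definition index :: "nat \<Rightarrow> int \<Rightarrow> int" where
  "index n x = (int n - 1) * (x div int n) + (x mod int n - 1)"

lemma coxeter_index:
  assumes "n \<ge> 3" "x mod int n \<noteq> 0"
  shows "coxeter n x mod int n \<noteq> 0 \<and> index n (coxeter n x) = index n x + 1"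
proof -
  define q r where "q = x div int n" and "r = x mod int n"
  have n: "int n > 0" using assms by simp
  have "0 \<le> r" "r \<noteq> 0" "r < int n" using n assms(2) by (simp_all add: r_def)
  then have r: "0 < r" "r < int n" by simp_all
  have x: "x = int n * q + r" by (simp add: q_def r_def)
  show ?thesis
  proof (cases "r = int n - 1")
    case True
    then have "coxeter n x = int n * (q + 1) + 1"
      using r by (simp add: coxeter_def r_def[symmetric]) (subst x, simp add: algebra_simps)
    moreover have "(int n * (q + 1) + 1) div int n = q + 1" "(int n * (q + 1) + 1) mod int n = 1"
      using assms by simp_all
    ultimately show ?thesis using True by (simp add: index_def q_def[symmetric] r_def[symmetric] algebra_simps)
  next
    case False
    then have "coxeter n x = int n * q + (r + 1)"
      using r by (simp add: coxeter_def r_def[symmetric]) (subst x, simp add: algebra_simps)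
    moreover have "(int n * q + (r + 1)) div int n = q" "(int n * q + (r + 1)) mod int n = r + 1"
      using r False by (simp_all add: add.commute)
    ultimately show ?thesis using r by (simp add: index_def q_def[symmetric] r_def[symmetric] algebra_simps)
  qed
qed

lemma funpow_coxeter_index:
  assumes "n \<ge> 3" "x mod int n \<noteq> 0"
  shows "(coxeter n ^^ k) x mod int n \<noteq> 0 \<and> index n ((coxeter n ^^ k) x) = index n x + int k"
  by (induction k) (use assms coxeter_index in auto)

lemma index_inj:
  assumes "n \<ge> 3" "x mod int n \<noteq> 0" "y mod int n \<noteq> 0" "index n x = index n y"
  shows "x = y"
proof -
  have decomp: "z div int n = index n z div (int n - 1) \<and> z mod int n - 1 = index n z mod (int n - 1)"
    if "z mod int n \<noteq> 0" for z
  proof -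
    have "0 \<le> z mod int n" "z mod int n < int n" using assms(1) by simp_all
    then have "0 \<le> z mod int n - 1" "z mod int n - 1 < int n - 1" using that by linarith+
    then show ?thesis by (simp add: index_def add.commute)
  qed
  have "x = int n * (x div int n) + x mod int n" "y = int n * (y div int n) + y mod int n"
    by simp_all
  then show ?thesis using decomp[OF assms(2)] decomp[OF assms(3)] assms(4) by (metis diff_add_cancel)
qed

lemma funpow_coxeter_multiple:
  assumes "x mod int n = 0"
  shows "(coxeter n ^^ k) x = x - int k * int n"
proof (induction k)
  case (Suc k)
  have "(x - int k * int n) mod int n = 0" using assms by (simp add: mod_diff_eq[symmetric])
  then have "coxeter n (x - int k * int n) = x - int k * int n - int n" by (simp add: coxeter_def)
  then show ?case by (simp add: Suc.IH algebra_simps)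
qed simp

lemma funpow_coxeter:
  assumes "n \<ge> 3"
  shows "coxeter n ^^ (n - 1) = translation n (spike n 0)"
proof
  fix x
  show "(coxeter n ^^ (n - 1)) x = translation n (spike n 0) x"
  proof (cases "x mod int n = 0")
    case True
    then show ?thesis using funpow_coxeter_multiple[OF True, of "n - 1"] assms
      by (simp add: translation_def spike_def algebra_simps)
  next
    case False
    have "(x + int n) mod int n = x mod int n" by simp
    moreover have "(x + int n) div int n = x div int n + 1" using assms by (simp add: div_add_self2)
    ultimately have "index n (x + int n) = index n x + int (n - 1)"
      using assms by (simp add: index_def algebra_simps)
    then have "(coxeter n ^^ (n - 1)) x = x + int n"
      using funpow_coxeter_index[OF assms False, of "n - 1"] index_inj[OF assms] False by simp
    then show ?thesis using False by (simp add: translation_def spike_def)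
  qed
qed

lemma affine_gen_add: "affine_gen n (i + k) j = affine_gen n i (j - int k) + int k"
proof -
  have "(j mod int n = int (i + k) mod int n) = ((j - int k) mod int n = int i mod int n)"
    "(j mod int n = (int (i + k) + 1) mod int n) = ((j - int k) mod int n = (int i + 1) mod int n)"
    by (simp_all add: mod_eq_dvd_iff algebra_simps)
  then show ?thesis unfolding affine_gen_def by simp
qed

lemma affine_gen_mod: "affine_gen n (i mod n) = affine_gen n i"
proof -
  have "int (i mod n) mod int n = int i mod int n"
    "(int (i mod n) + 1) mod int n = (int i + 1) mod int n"
    by (simp_all add: of_nat_mod mod_add_left_eq)
  then show ?thesis unfolding affine_gen_def by (simp add: fun_eq_iff)
qed

lemma gen_prod_rotate:
  "gen_prod n (map (\<lambda>i. (i + k) mod n) is) j = gen_prod n is (j - int k) + int k"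
  by (induction "is" arbitrary: j) (simp_all add: affine_gen_mod affine_gen_add)

lemma funpow_conj_shift:
  "(\<lambda>j. f (j - d) + d) ^^ m = (\<lambda>j. (f ^^ m) (j - d) + (d :: int))"
  by (induction m) (simp_all add: fun_eq_iff)

lemma translation_spike_shift:
  assumes "0 \<le> k" "k < int n"
  shows "translation n (spike n 0) (j - k) + k = translation n (spike n k) j"
proof -
  have "(j - k) mod int n = 0 \<longleftrightarrow> j mod int n = k"
    using assms by (simp add: mod_eq_0_iff_dvd mod_eq_dvd_iff[of j _ k, symmetric])
  then show ?thesis by (simp add: translation_def spike_def)
qed

definition coxeter_word :: "nat \<Rightarrow> nat \<Rightarrow> nat list" where
  "coxeter_word n k = map (\<lambda>i. (i + k) mod n) [0..<n]"

lemma funpow_gen_prod_coxeter_word: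
  assumes "n \<ge> 3" "k < n"
  shows "gen_prod n (coxeter_word n k) ^^ (n - 1) = translation n (spike n (int k))"
proof -
  have "gen_prod n (coxeter_word n k) = (\<lambda>j. coxeter n (j - int k) + int k)"
    using gen_prod_rotate[of n k "[0..<n]"] gen_prod_coxeter[OF assms(1)]
    by (simp add: coxeter_word_def fun_eq_iff)
  then have "gen_prod n (coxeter_word n k) ^^ (n - 1) = (\<lambda>j. (coxeter n ^^ (n - 1)) (j - int k) + int k)"
    by (simp only: funpow_conj_shift)
  also have "\<dots> = (\<lambda>j. translation n (spike n 0) (j - int k) + int k)"
    by (simp only: funpow_coxeter[OF assms(1)])
  also have "\<dots> = translation n (spike n (int k))"
    using assms by (simp add: translation_spike_shift fun_eq_iff)
  finally show ?thesis .
qed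

section \<open>A quadratic family of avoiders\<close>

definition spike_word :: "nat \<Rightarrow> nat \<Rightarrow> nat \<Rightarrow> nat list" where
  "spike_word n u v = concat (replicate ((n - 1) * u) (coxeter_word n 0))
     @ concat (replicate ((n - 1) * v) (coxeter_word n 1))"

definition spike_translation :: "nat \<Rightarrow> nat \<Rightarrow> nat \<Rightarrow> int \<Rightarrow> int" where
  "spike_translation n u v = translation n (\<lambda>r. int u * spike n 0 r + int v * spike n 1 r)"

lemma gen_prod_spike_word:
  assumes "n \<ge> 3"
  shows "gen_prod n (spike_word n u v) = spike_translation n u v"
proof -
  have "gen_prod n (spike_word n u v)
      = (gen_prod n (coxeter_word n 0) ^^ (n - 1)) ^^ u \<circ> (gen_prod n (coxeter_word n 1) ^^ (n - 1)) ^^ v"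
    by (simp add: spike_word_def gen_prod_append gen_prod_replicate funpow_mult mult.commute)
  also have "\<dots> = translation n (spike n 0) ^^ u \<circ> translation n (spike n 1) ^^ v"
    using funpow_gen_prod_coxeter_word[of n 0] funpow_gen_prod_coxeter_word[of n 1] assms by simp
  also have "\<dots> = spike_translation n u v"
    by (simp add: funpow_translation spike_translation_def fun_eq_iff translation_translation)
  finally show ?thesis .
qed

lemma length_spike_word: "length (spike_word n u v) = (n - 1) * (u + v) * n"
  by (simp add: spike_word_def length_concat sum_list_replicate coxeter_word_def algebra_simps)

lemma set_spike_word: "n > 0 \<Longrightarrow> \<forall>i\<in>set (spike_word n u v). i < n"
  by (auto simp: spike_word_def coxeter_word_def)

lemma affine_perm_spike_translation:
  assumes "n \<ge> 3"
  shows "affine_perm n (spike_translation n u v)"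
  unfolding spike_translation_def
proof (rule affine_perm_translation)
  show "(\<Sum>i=1..int n. int u * spike n 0 (i mod int n) + int v * spike n 1 (i mod int n)) = 0"
    using assms sum_spike[of 0 n] sum_spike[of 1 n]
    by (simp add: sum.distrib sum_distrib_left[symmetric])
qed

lemma avoids_spike_translation:
  assumes "longest_dec p \<ge> 4"
  shows "avoids (spike_translation n u v) p"
  unfolding spike_translation_def
proof (rule avoids_translation)
  let ?c = "\<lambda>r. int u * spike n 0 r + int v * spike n 1 r"
  have sub: "range ?c \<subseteq> {?c 0, ?c 1, int u + int v}"
    by (auto simp: spike_def)
  then show "finite (range ?c)" by (rule finite_subset) simp
  have "card (range ?c) \<le> card {?c 0, ?c 1, int u + int v}"
    by (rule card_mono[OF _ sub]) simp
  also have "\<dots> \<le> 3" by (rule card_insert_le_m1) (simp_all add: card_insert_le_m1)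
  finally show "card (range ?c) < longest_dec p" using assms by simp
qed

lemma spike_translation_inj:
  assumes "n \<ge> 3" "spike_translation n u v = spike_translation n u' v'"
  shows "u = u' \<and> v = v'"
proof -
  have "int u + int v = int u' + int v'"
    using translation_eq_imp_vector_eq[OF assms(2)[unfolded spike_translation_def], of 2] assms(1)
    by (simp add: spike_def)
  moreover have "int u * (1 - int n) + int v = int u' * (1 - int n) + int v'"
    using translation_eq_imp_vector_eq[OF assms(2)[unfolded spike_translation_def], of 0] assms(1)
    by (simp add: spike_def)
  ultimately have "int n * int u = int n * int u'" by (auto simp: algebra_simps)
  then show ?thesis using assms(1) \<open>int u + int v = int u' + int v'\<close> by auto
qed

lemma affine_length_spike_translation:
  assumes "n \<ge> 3"
  shows "u + v \<le> affine_length n (spike_translation n u v)"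
    and "affine_length n (spike_translation n u v) \<le> (n - 1) * (u + v) * n"
proof -
  have gen: "\<exists>is. (\<forall>i\<in>set is. i < n) \<and> spike_translation n u v = gen_prod n is"
    using gen_prod_spike_word[OF assms] set_spike_word[of n u v] assms by auto
  have "spike_translation n u v 2 - 2 = int n * (int u + int v)"
    using assms by (simp add: spike_translation_def translation_def spike_def)
  moreover have "int u + int v \<le> int n * (int u + int v)"
    using assms by (simp add: mult_le_cancel_right1)
  ultimately show "u + v \<le> affine_length n (spike_translation n u v)"
    using abs_sub_le_affine_length[OF gen, of 2] by linarith
  show "affine_length n (spike_translation n u v) \<le> (n - 1) * (u + v) * n"
    using affine_length_le_length[OF set_spike_word, of n u v] gen_prod_spike_word[OF assms]
      length_spike_word assms by simp
qed

lemma ex_square_gt_linear: "\<exists>K::nat. (C * (T + K) + 1) * B < (K + 1) * (K + 1)"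
proof
  define K where "K = (C * T + C + 1) * (B + 1)"
  have "C * B + 1 \<le> K + 1" "C * T * B + B < C * B + K + 1"
    by (simp_all add: K_def algebra_simps)
  then have "(C * (T + K) + 1) * B < (K + 1) * (C * B + 1)"
    by (simp add: algebra_simps)
  also have "\<dots> \<le> (K + 1) * (K + 1)"
    using \<open>C * B + 1 \<le> K + 1\<close> by (rule mult_le_mono2)
  finally show "(C * (T + K) + 1) * B < (K + 1) * (K + 1)" .
qed

lemma square_le_avoid_coeff_bound:
  assumes "n \<ge> 3" "longest_dec p \<ge> 4" "\<forall>i. avoid_coeff p n i \<le> B"
    and "(LEAST k::nat. False) < T"
  shows "(K + 1) * (K + 1) \<le> (2 * (n - 1) * n * (T + K) + 1) * B"
proof -
  define L where "L i = {w. affine_perm n w \<and> avoids w p \<and> affine_length n w = i}" for i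
  define M where "M = 2 * (n - 1) * n * (T + K)"
  define Q where "Q = {T..T + K} \<times> {T..T + K}"
  let ?f = "\<lambda>(u, v). spike_translation n u v"
  have "inj_on ?f Q"
    using spike_translation_inj[OF assms(1)] by (auto simp: inj_on_def)
  then have "(K + 1) * (K + 1) = card (?f ` Q)"
    by (simp add: card_image Q_def card_cartesian_product)
  also have "\<dots> \<le> card (\<Union>i\<in>{T..M}. L i)"
  proof (rule card_mono)
    show "finite (\<Union>i\<in>{T..M}. L i)"
      using finite_affine_length_level assms(4) by (auto simp: L_def)
    show "?f ` Q \<subseteq> (\<Union>i\<in>{T..M}. L i)"
    proof clarify
      fix u v assume "(u, v) \<in> Q"
      then have "T \<le> u + v" "(n - 1) * (u + v) * n \<le> M"
        by (auto simp: Q_def M_def intro!: mult_le_mono)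
      then show "spike_translation n u v \<in> (\<Union>i\<in>{T..M}. L i)"
        using affine_length_spike_translation[OF assms(1), of u v]
          affine_perm_spike_translation[OF assms(1)] avoids_spike_translation[OF assms(2)]
        by (auto simp: L_def)
    qed
  qed
  also have "\<dots> \<le> (\<Sum>i\<in>{T..M}. card (L i))" by (rule card_UN_le) simp
  also have "\<dots> \<le> (\<Sum>i\<in>{T..M}. B)"
    using assms(3) by (intro sum_mono) (simp add: avoid_coeff_def L_def)
  also have "\<dots> \<le> (M + 1) * B" by (simp add: mult_le_mono1 del: mult_Suc)
  finally show ?thesis by (simp add: M_def)
qed

theorem mainTheorem9:
  fixes n :: nat and p :: "nat list"
  assumes "n \<ge> 3" and "is_pattern p" and "longest_dec p \<ge> 4"
  shows "\<forall>B. \<exists>i. avoid_coeff p n i > B"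
proof (rule ccontr)
  assume "\<not> (\<forall>B. \<exists>i. avoid_coeff p n i > B)"
  then obtain B where "\<forall>i. avoid_coeff p n i \<le> B" by (auto simp: not_less)
  moreover obtain K where "(2 * (n - 1) * n * (Suc (LEAST k::nat. False) + K) + 1) * B < (K + 1) * (K + 1)"
    using ex_square_gt_linear by blast
  ultimately show False
    using square_le_avoid_coeff_bound[OF assms(1,3), of B "Suc (LEAST k::nat. False)" K] by simp
qed

end
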